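(* Let $0<c\le a_2$. Any partial listing $\phi$ of $A$ becomes $K_c$-connected after at most $c-2$ further calls to Next$(\varnothing)$.
   Context: Let $k\ge 2$ and let $a_k,\dots,a_2$ be positive integers with $a_2\le a_i$ for all $2<i\le k$. Let $A=[a_k]\times\cdots\times[a_2]$, where $[a]=\{0,\dots,a-1\}$; elements are written $\alpha=\alpha_k\alpha_{k-1}\cdots\alpha_2$. A prefix of $\alpha$ is $\alpha_k\cdots\alpha_{l+1}$ for some $2\le l+1\le k$; $\varnothing$ denotes the empty prefix; for a tuple $\beta=\alpha_k\cdots\alpha_{l+1}$ and $i$, $\beta i$ denotes $\alpha_k\cdots\alpha_{l+1}i$. An array $\phi:A\to\{0,1\}$ is initialized to $0$ everywhere. A tuple $\beta$ (a prefix or an element) is non-empty if some $\alpha\in A$ having $\beta$ as a prefix (or equal to $\beta$) has $\phi(\alpha)=1$, empty otherwise, and full if all such $\alpha$ have $\phi(\alpha)=1$. The procedure Next$(\beta)$, for $\beta=\alpha_k\cdots\alpha_{l+1}$ (with $l=k$ for $\beta=\varnothing$): let $m$ be the least $i$ such that $\beta i$ is empty; if $l=2$, set $\phi(\beta m):=1$ and stop; otherwise, if $m\ge a_2$, replace $m$ by the least $i$ such that $\beta i$ is not full; then call Next$(\beta m)$. A partial listing of $A$ is an array $\phi$ obtained from the all-zero array by finitely many calls of Next$(\varnothing)$. For $0<c\le a_2$, a partial listing $\phi$ is $K_c$-connected if for every prefix $\alpha'$ (for which $\alpha'1$ is defined), whenever $\alpha'1$ is non-empty, $\alpha'(c-1)$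 is also non-empty. *)

theory Defs
  imports Main
begin

(* Tuples alpha = alpha_k ... alpha_2 are lists [alpha_k, ..., alpha_2];
   list position t holds coordinate k - t, which ranges over [a (k - t)] = {0..<a (k-t)}.
   A prefix beta = alpha_k ... alpha_{l+1} is a list of length k - l;
   the next coordinate appended to it is coordinate l = k - length beta.
   The array phi : A -> {0,1} is modelled as a predicate on lists (True = 1). *)

definition elemA :: "nat \<Rightarrow> (nat \<Rightarrow> nat) \<Rightarrow> nat list set" where
  "elemA k a = {al. length al = k - 1 \<and> (\<forall>t < k - 1. al ! t < a (k - t))}"

definition is_prefix :: "nat \<Rightarrow> (nat \<Rightarrow> nat) \<Rightarrow> nat list \<Rightarrow> bool" where
  "is_prefix k a beta = (\<exists>al \<in> elemA k a. take (length beta) al = beta)"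

definition nonempty :: "nat \<Rightarrow> (nat \<Rightarrow> nat) \<Rightarrow> (nat list \<Rightarrow> bool) \<Rightarrow> nat list \<Rightarrow> bool" where
  "nonempty k a phi beta = (\<exists>al \<in> elemA k a. take (length beta) al = beta \<and> phi al)"

definition full :: "nat \<Rightarrow> (nat \<Rightarrow> nat) \<Rightarrow> (nat list \<Rightarrow> bool) \<Rightarrow> nat list \<Rightarrow> bool" where
  "full k a phi beta = (\<forall>al \<in> elemA k a. take (length beta) al = beta \<longrightarrow> phi al)"

(* nxt k a d beta phi = Next(beta), where beta has length k - (d + 2), i.e. l = d + 2.
   "least i such that beta i is empty": since beta i with i >= a_l is never non-empty,
   this LEAST equals a_l exactly when all beta i (i in [a_l]) are non-empty. *)
primrec nxt :: "nat \<Rightarrow> (nat \<Rightarrow> nat) \<Rightarrow> nat \<Rightarrow> nat list \<Rightarrow> (nat list \<Rightarrow> bool) \<Rightarrow> (nat list \<Rightarrow> bool)" where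
  "nxt k a 0 beta phi = phi(beta @ [LEAST i. \<not> nonempty k a phi (beta @ [i])] := True)"
| "nxt k a (Suc d) beta phi =
     (let m = (LEAST i. \<not> nonempty k a phi (beta @ [i]));
          m' = (if a 2 \<le> m then (LEAST i. \<not> full k a phi (beta @ [i])) else m)
      in nxt k a d (beta @ [m']) phi)"

definition next_empty :: "nat \<Rightarrow> (nat \<Rightarrow> nat) \<Rightarrow> (nat list \<Rightarrow> bool) \<Rightarrow> (nat list \<Rightarrow> bool)" where
  "next_empty k a phi = nxt k a (k - 2) [] phi"

(* a call of Next(empty) is only possible while A is not completely listed *)
definition partial_listing :: "nat \<Rightarrow> (nat \<Rightarrow> nat) \<Rightarrow> (nat list \<Rightarrow> bool) \<Rightarrow> bool" where
  "partial_listing k a phi =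
     (\<exists>n. phi = (next_empty k a ^^ n) (\<lambda>_. False) \<and>
          (\<forall>i < n. \<not> full k a ((next_empty k a ^^ i) (\<lambda>_. False)) []))"

definition Kc_connected :: "nat \<Rightarrow> (nat \<Rightarrow> nat) \<Rightarrow> nat \<Rightarrow> (nat list \<Rightarrow> bool) \<Rightarrow> bool" where
  "Kc_connected k a c phi =
     (\<forall>beta. is_prefix k a beta \<and> length beta < k - 1 \<and> 1 < a (k - length beta) \<longrightarrow>
        nonempty k a phi (beta @ [1]) \<longrightarrow> nonempty k a phi (beta @ [c - 1]))"

end

theory Submission
  imports Defs
begin

text \<open>
  Two invariants hold along every run of Next(\<open>\<emptyset>\<close>): a child \<open>\<alpha>'1\<close> is never non-empty
  while \<open>\<alpha>'0\<close> is empty, and a non-full prefix containing two listed elements has all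
  children below \<open>a\<^sub>2\<close> non-empty and all children before it full.
  Because of them, while some prefix \<open>b\<close> violates \<open>K\<^sub>c\<close>-connectedness (\<open>b1\<close> non-empty,
  \<open>b(c-1)\<close> empty), the next call descends along \<open>b\<close>, lists an element below \<open>bm\<close> for the
  least empty child \<open>m \<ge> 2\<close> of \<open>b\<close>, and continues with zeros.
  So every violation after a call was a violation before it, and its least empty child has
  grown by one. As this index starts at \<open>2\<close> or more and stays below \<open>c\<close> during a
  violation, \<open>c - 2\<close> calls suffice.
\<close>

definition least_empty :: "nat \<Rightarrow> (nat \<Rightarrow> nat) \<Rightarrow> (nat list \<Rightarrow> bool) \<Rightarrow> nat list \<Rightarrow> nat" where
  "least_empty k a phi beta = (LEAST i. \<not> nonempty k a phi (beta @ [i]))"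

definition least_nonfull :: "nat \<Rightarrow> (nat \<Rightarrow> nat) \<Rightarrow> (nat list \<Rightarrow> bool) \<Rightarrow> nat list \<Rightarrow> nat" where
  "least_nonfull k a phi beta = (LEAST i. \<not> full k a phi (beta @ [i]))"

definition next_choice :: "nat \<Rightarrow> (nat \<Rightarrow> nat) \<Rightarrow> (nat list \<Rightarrow> bool) \<Rightarrow> nat \<Rightarrow> nat list \<Rightarrow> nat" where
  "next_choice k a phi d beta =
     (if 0 < d \<and> a 2 \<le> least_empty k a phi beta then least_nonfull k a phi beta
      else least_empty k a phi beta)"

primrec next_path :: "nat \<Rightarrow> (nat \<Rightarrow> nat) \<Rightarrow> nat \<Rightarrow> nat list \<Rightarrow> (nat list \<Rightarrow> bool) \<Rightarrow> nat list" where
  "next_path k a 0 beta phi = beta @ [next_choice k a phi 0 beta]"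
| "next_path k a (Suc d) beta phi = next_path k a d (beta @ [next_choice k a phi (Suc d) beta]) phi"

definition next_elem :: "nat \<Rightarrow> (nat \<Rightarrow> nat) \<Rightarrow> (nat list \<Rightarrow> bool) \<Rightarrow> nat list" where
  "next_elem k a phi = next_path k a (k - 2) [] phi"

lemma nxt_eq_fun_upd: "nxt k a d beta phi = phi(next_path k a d beta phi := True)"
  by (induction d arbitrary: beta)
    (simp_all add: next_choice_def least_empty_def least_nonfull_def Let_def)

lemma next_empty_eq_fun_upd: "next_empty k a phi = phi(next_elem k a phi := True)"
  unfolding next_empty_def next_elem_def by (rule nxt_eq_fun_upd)

lemma length_next_path: "length (next_path k a d beta phi) = length beta + d + 1"
  by (induction d arbitrary: beta) auto

lemma take_next_path: "take (length beta) (next_path k a d beta phi) = beta"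
proof (induction d arbitrary: beta)
  case (Suc d)
  let ?beta' = "beta @ [next_choice k a phi (Suc d) beta]"
  have "take (length beta) (next_path k a d ?beta' phi)
      = take (length beta) (take (length ?beta') (next_path k a d ?beta' phi))"
    by (simp add: min_def)
  also have "\<dots> = beta" using Suc[of ?beta'] by simp
  finally show ?case by simp
qed simp

lemma nth_next_path:
  "i \<le> d \<Longrightarrow> next_path k a d beta phi ! (length beta + i)
     = next_choice k a phi (d - i) (take (length beta + i) (next_path k a d beta phi))"
proof (induction d arbitrary: beta i)
  case (Suc d)
  let ?beta' = "beta @ [next_choice k a phi (Suc d) beta]"
  show ?case
  proof (cases i)
    case 0
    have "take (Suc (length beta)) (next_path k a d ?beta' phi) = ?beta'"
      using take_next_path[of ?beta'] by simp
    then have "next_path k a d ?beta' phi ! length beta = next_choice k a phi (Suc d) beta"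
      by (metis length_append_singleton lessI nth_append_length nth_take)
    then show ?thesis using 0 take_next_path[of beta k a "Suc d" phi] by simp
  next
    case (Suc i')
    then show ?thesis using Suc.IH[of i' ?beta'] Suc.prems by simp
  qed
qed simp

lemma length_next_elem: "2 \<le> k \<Longrightarrow> length (next_elem k a phi) = k - 1"
  by (simp add: next_elem_def length_next_path)

lemma nth_next_elem:
  "2 \<le> k \<Longrightarrow> i < k - 1 \<Longrightarrow>
     next_elem k a phi ! i = next_choice k a phi (k - 2 - i) (take i (next_elem k a phi))"
  using nth_next_path[of i "k - 2" k a "[]" phi] by (simp add: next_elem_def)

lemma take_Suc_eq_snoc_iff:
  "take (Suc (length g)) xs = g @ [j] \<longleftrightarrow>
     length g < length xs \<and> take (length g) xs = g \<and> xs ! length g = j"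
  by (cases "length g < length xs") (auto simp: take_Suc_conv_app_nth take_all)

lemma nonempty_fun_upd_True:
  "nonempty k a (phi(x := True)) g \<longleftrightarrow>
     nonempty k a phi g \<or> (x \<in> elemA k a \<and> take (length g) x = g)"
  unfolding nonempty_def by auto

lemma full_fun_upd_True: "full k a phi g \<Longrightarrow> full k a (phi(x := True)) g"
  unfolding full_def by auto

lemma take_prefix_take: "take (length g) al = g \<Longrightarrow> take (length (take n g)) al = take n g"
  by (metis length_take min.commute take_take)

lemma nonempty_take: "nonempty k a phi g \<Longrightarrow> nonempty k a phi (take n g)"
  unfolding nonempty_def using take_prefix_take by blast

lemma full_take: "full k a phi (take n g) \<Longrightarrow> full k a phi g"
  unfolding full_def using take_prefix_take by blast

lemma elemA_extend:
  assumes "is_prefix k a b" "length b < k - 1" "j < a (k - length b)"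
  shows "\<exists>al \<in> elemA k a. take (Suc (length b)) al = b @ [j]"
proof -
  obtain al where al: "al \<in> elemA k a" "take (length b) al = b"
    using assms(1) unfolding is_prefix_def by blast
  then have "al[length b := j] \<in> elemA k a"
    using assms(2,3) unfolding elemA_def by (auto simp: nth_list_update)
  moreover have "take (Suc (length b)) (al[length b := j]) = b @ [j]"
    using al assms(2) unfolding elemA_def by (auto simp: take_Suc_conv_app_nth)
  ultimately show ?thesis by blast
qed

lemma not_nonempty_beyond_bound: "\<not> nonempty k a phi (g @ [a (k - length g)])"
  unfolding nonempty_def elemA_def by (auto simp: take_Suc_eq_snoc_iff[simplified])

lemma not_nonempty_least_empty: "\<not> nonempty k a phi (g @ [least_empty k a phi g])"
  unfolding least_empty_def by (rule LeastI[OF not_nonempty_beyond_bound])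

lemma nonempty_less_least_empty: "i < least_empty k a phi g \<Longrightarrow> nonempty k a phi (g @ [i])"
  unfolding least_empty_def using not_less_Least by blast

lemma least_empty_le: "\<not> nonempty k a phi (g @ [i]) \<Longrightarrow> least_empty k a phi g \<le> i"
  unfolding least_empty_def by (rule Least_le)

lemma le_least_empty: "(\<And>i. i < m \<Longrightarrow> nonempty k a phi (g @ [i])) \<Longrightarrow> m \<le> least_empty k a phi g"
  using not_nonempty_least_empty not_le by blast

lemma full_less_least_nonfull: "i < least_nonfull k a phi g \<Longrightarrow> full k a phi (g @ [i])"
  unfolding least_nonfull_def using not_less_Least by blast

lemma least_nonfull_eq:
  "\<not> full k a phi (g @ [j]) \<Longrightarrow> (\<And>i. i < j \<Longrightarrow> full k a phi (g @ [i])) \<Longrightarrow> least_nonfull k a phi g = j"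
  unfolding least_nonfull_def by (rule Least_equality) (auto simp: not_le[symmetric])

definition heavy :: "nat \<Rightarrow> (nat \<Rightarrow> nat) \<Rightarrow> (nat list \<Rightarrow> bool) \<Rightarrow> nat list \<Rightarrow> bool" where
  "heavy k a phi g = (\<exists>al1 \<in> elemA k a. \<exists>al2 \<in> elemA k a. al1 \<noteq> al2 \<and>
     take (length g) al1 = g \<and> take (length g) al2 = g \<and> phi al1 \<and> phi al2)"

definition zero_before_one :: "nat \<Rightarrow> (nat \<Rightarrow> nat) \<Rightarrow> (nat list \<Rightarrow> bool) \<Rightarrow> bool" where
  "zero_before_one k a phi = (\<forall>g. nonempty k a phi (g @ [1]) \<longrightarrow> nonempty k a phi (g @ [0]))"

definition heavy_settled :: "nat \<Rightarrow> (nat \<Rightarrow> nat) \<Rightarrow> (nat list \<Rightarrow> bool) \<Rightarrow> bool" where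
  "heavy_settled k a phi = (\<forall>g j. heavy k a phi (g @ [j]) \<and> \<not> full k a phi (g @ [j]) \<longrightarrow>
     (\<forall>i < a 2. nonempty k a phi (g @ [i])) \<and> (\<forall>i < j. full k a phi (g @ [i])))"

lemma length_less_if_heavy: "heavy k a phi g \<Longrightarrow> length g < k - 1"
proof (rule ccontr)
  assume "heavy k a phi g" "\<not> length g < k - 1"
  then obtain al1 al2 where "al1 \<in> elemA k a" "al2 \<in> elemA k a" "al1 \<noteq> al2"
    "take (length g) al1 = g" "take (length g) al2 = g" "k - 1 \<le> length g"
    unfolding heavy_def by auto
  then show False unfolding elemA_def by simp
qed

lemma heavy_take: "heavy k a phi g \<Longrightarrow> heavy k a phi (take n g)"
  unfolding heavy_def using take_prefix_take by blast

lemma heavy_if_nonempty_children: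
  "nonempty k a phi (g @ [i]) \<Longrightarrow> nonempty k a phi (g @ [j]) \<Longrightarrow> i \<noteq> j \<Longrightarrow> heavy k a phi g"
proof -
  assume "nonempty k a phi (g @ [i])" "nonempty k a phi (g @ [j])" "i \<noteq> j"
  then obtain al1 al2 where "al1 \<in> elemA k a" "al2 \<in> elemA k a" "phi al1" "phi al2"
    "take (Suc (length g)) al1 = g @ [i]" "take (Suc (length g)) al2 = g @ [j]"
    unfolding nonempty_def by auto
  with \<open>i \<noteq> j\<close> show ?thesis
    unfolding heavy_def take_Suc_eq_snoc_iff by metis
qed

lemma heavy_fun_upd_True:
  assumes "heavy k a (phi(x := True)) g" "\<not> heavy k a phi g"
  shows "x \<in> elemA k a" "take (length g) x = g" "nonempty k a phi g"
proof -
  obtain al1 al2 where al: "al1 \<in> elemA k a" "al2 \<in> elemA k a" "al1 \<noteq> al2"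
    "take (length g) al1 = g" "take (length g) al2 = g"
    "(phi(x := True)) al1" "(phi(x := True)) al2"
    using assms(1) unfolding heavy_def by blast
  have "(al1 = x \<and> phi al2) \<or> (al2 = x \<and> phi al1)"
    using al assms(2) unfolding heavy_def by (auto split: if_splits)
  then show "x \<in> elemA k a" "take (length g) x = g" "nonempty k a phi g"
    using al unfolding nonempty_def by auto
qed

lemma zero_before_one_init: "zero_before_one k a (\<lambda>_. False)"
  unfolding zero_before_one_def nonempty_def by simp

lemma heavy_settled_init: "heavy_settled k a (\<lambda>_. False)"
  unfolding heavy_settled_def heavy_def by simp

lemma least_empty_pos_if_next_choice_pos:
  "0 < a 2 \<Longrightarrow> next_choice k a phi d g \<noteq> 0 \<Longrightarrow> 0 < least_empty k a phi g"
  unfolding next_choice_def by (auto split: if_splits)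

lemma zero_before_one_next_empty:
  assumes "2 \<le> k" "0 < a 2" "zero_before_one k a phi"
  shows "zero_before_one k a (next_empty k a phi)"
  unfolding zero_before_one_def
proof (intro allI impI)
  fix g
  let ?x = "next_elem k a phi"
  assume one: "nonempty k a (next_empty k a phi) (g @ [1])"
  have "nonempty k a phi (g @ [0])"
  proof (cases "nonempty k a phi (g @ [1])")
    case True
    then show ?thesis using assms(3) unfolding zero_before_one_def by blast
  next
    case False
    then have "take (Suc (length g)) ?x = g @ [1]"
      using one by (simp add: next_empty_eq_fun_upd nonempty_fun_upd_True)
    then have "length g < k - 1" "take (length g) ?x = g" "?x ! length g = 1"
      using length_next_elem[OF assms(1)] take_Suc_eq_snoc_iff by metis+
    then have "next_choice k a phi (k - 2 - length g) g = 1"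
      using nth_next_elem[OF assms(1)] by metis
    then have "0 < least_empty k a phi g"
      using least_empty_pos_if_next_choice_pos[of a k phi "k - 2 - length g" g] assms(2) by simp
    then show ?thesis by (rule nonempty_less_least_empty)
  qed
  then show "nonempty k a (next_empty k a phi) (g @ [0])"
    by (simp add: next_empty_eq_fun_upd nonempty_fun_upd_True)
qed

lemma heavy_settled_next_empty:
  assumes "2 \<le> k" "heavy_settled k a phi"
  shows "heavy_settled k a (next_empty k a phi)"
  unfolding heavy_settled_def
proof (intro allI impI)
  fix g j
  let ?x = "next_elem k a phi"
  assume heavy_nonfull:
    "heavy k a (next_empty k a phi) (g @ [j]) \<and> \<not> full k a (next_empty k a phi) (g @ [j])"
  then have nonfull: "\<not> full k a phi (g @ [j])"
    by (auto simp: next_empty_eq_fun_upd dest: full_fun_upd_True)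
  have "(\<forall>i < a 2. nonempty k a phi (g @ [i])) \<and> (\<forall>i < j. full k a phi (g @ [i]))"
  proof (cases "heavy k a phi (g @ [j])")
    case True
    then show ?thesis using assms(2) nonfull unfolding heavy_settled_def by blast
  next
    case False
    then have "take (Suc (length g)) ?x = g @ [j]" and nonempty_j: "nonempty k a phi (g @ [j])"
      using heavy_fun_upd_True[of k a phi ?x "g @ [j]"] heavy_nonfull
      by (simp_all add: next_empty_eq_fun_upd)
    moreover have "Suc (length g) < k - 1"
      using heavy_nonfull length_less_if_heavy by fastforce
    ultimately have "next_choice k a phi (k - 2 - length g) g = j" "0 < k - 2 - length g"
      using length_next_elem[OF assms(1)] nth_next_elem[OF assms(1)] take_Suc_eq_snoc_iff
      by (metis Suc_lessD, linarith)
    moreover have "j \<noteq> least_empty k a phi g"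
      using nonempty_j not_nonempty_least_empty by metis
    ultimately have "a 2 \<le> least_empty k a phi g" "j = least_nonfull k a phi g"
      unfolding next_choice_def by (auto split: if_splits)
    then show ?thesis
      using nonempty_less_least_empty full_less_least_nonfull by fastforce
  qed
  then show "(\<forall>i < a 2. nonempty k a (next_empty k a phi) (g @ [i])) \<and>
             (\<forall>i < j. full k a (next_empty k a phi) (g @ [i]))"
    by (simp add: next_empty_eq_fun_upd nonempty_fun_upd_True full_fun_upd_True)
qed

lemma take_next_elem_heavy:
  assumes "2 \<le> k" "heavy_settled k a phi" "heavy k a phi b" "\<not> full k a phi b"
  shows "take (length b) (next_elem k a phi) = b"
proof -
  let ?x = "next_elem k a phi"
  have "take i ?x = take i b" if "i \<le> length b" for i
    using that
  proof (induction i)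
    case (Suc i)
    let ?g = "take i b" and ?j = "b ! i"
    have b_Suc: "take (Suc i) b = ?g @ [?j]" and length_g: "length ?g = i"
      using Suc.prems by (simp_all add: take_Suc_conv_app_nth)
    have "heavy k a phi (?g @ [?j])" "\<not> full k a phi (?g @ [?j])"
      using heavy_take[OF assms(3)] full_take assms(4) b_Suc by metis+
    then have "a 2 \<le> least_empty k a phi ?g" "least_nonfull k a phi ?g = ?j"
      using assms(2) unfolding heavy_settled_def
      by (auto intro: le_least_empty least_nonfull_eq)
    moreover have i_less: "i < k - 2"
      using length_less_if_heavy[OF assms(3)] Suc.prems by linarith
    ultimately have "next_choice k a phi (k - 2 - i) ?g = ?j"
      unfolding next_choice_def by (simp only: zero_less_diff if_True simp_thms)
    then have "?x ! i = ?j"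
      using nth_next_elem[OF assms(1), of i] Suc i_less by simp
    then show ?case
      using Suc i_less length_next_elem[OF assms(1)] b_Suc
      by (simp add: take_Suc_conv_app_nth)
  qed simp
  then show ?thesis by simp
qed

lemma nth_next_elem_eq_0:
  assumes "2 \<le> k" "0 < a 2" "\<not> nonempty k a phi (take n (next_elem k a phi))" "n \<le> i" "i < k - 1"
  shows "next_elem k a phi ! i = 0"
proof -
  let ?g = "take i (next_elem k a phi)"
  have "take n (?g @ [0]) = take n (next_elem k a phi)"
    using assms(1,4,5) by (simp add: length_next_elem)
  then have "\<not> nonempty k a phi (?g @ [0])"
    using nonempty_take assms(3) by metis
  then have "least_empty k a phi ?g = 0"
    using least_empty_le by fastforce
  then show ?thesis
    using nth_next_elem[OF assms(1,5)] assms(2) by (simp add: next_choice_def)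
qed

lemma partial_listing_invariants:
  assumes "2 \<le> k" "0 < a 2" "partial_listing k a phi"
  shows "zero_before_one k a phi" "heavy_settled k a phi"
proof -
  obtain n where "phi = (next_empty k a ^^ n) (\<lambda>_. False)"
    using assms(3) unfolding partial_listing_def by blast
  moreover have "zero_before_one k a ((next_empty k a ^^ n) (\<lambda>_. False)) \<and>
                 heavy_settled k a ((next_empty k a ^^ n) (\<lambda>_. False))"
    by (induction n) (simp_all add: zero_before_one_init heavy_settled_init
        zero_before_one_next_empty[of k a, OF assms(1,2)] heavy_settled_next_empty[OF assms(1)])
  ultimately show "zero_before_one k a phi" "heavy_settled k a phi" by simp_all
qed

definition violation :: "nat \<Rightarrow> (nat \<Rightarrow> nat) \<Rightarrow> nat \<Rightarrow> (nat list \<Rightarrow> bool) \<Rightarrow> nat list \<Rightarrow> bool" where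
  "violation k a c phi b = (is_prefix k a b \<and> length b < k - 1 \<and> 1 < a (k - length b) \<and>
     nonempty k a phi (b @ [1]) \<and> \<not> nonempty k a phi (b @ [c - 1]))"

lemma Kc_connected_iff_no_violation: "Kc_connected k a c phi \<longleftrightarrow> (\<nexists>b. violation k a c phi b)"
  unfolding Kc_connected_def violation_def by blast

locale listing_params =
  fixes k :: nat and a :: "nat \<Rightarrow> nat" and c :: nat
  assumes two_le_k: "2 \<le> k"
    and a2_le: "\<forall>i. 2 < i \<and> i \<le> k \<longrightarrow> a 2 \<le> a i"
    and c_pos: "0 < c"
    and c_le_a2: "c \<le> a 2"
begin

lemma a2_pos: "0 < a 2"
  using c_pos c_le_a2 by simp

lemma c_le_coord_bound: "t < k - 1 \<Longrightarrow> c \<le> a (k - t)"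
proof (cases "k - t = 2")
  case False
  moreover assume "t < k - 1"
  ultimately have "a 2 \<le> a (k - t)" using a2_le by simp
  then show ?thesis using c_le_a2 by simp
qed (use c_le_a2 in simp)

lemma violation_not_full:
  assumes "violation k a c phi b"
  shows "\<not> full k a phi b"
proof -
  have "c - 1 < a (k - length b)"
    using assms c_le_coord_bound c_pos unfolding violation_def by fastforce
  then obtain al where "al \<in> elemA k a" "take (Suc (length b)) al = b @ [c - 1]"
    using assms elemA_extend unfolding violation_def by blast
  then have "\<not> full k a phi (b @ [c - 1])"
    using assms unfolding violation_def full_def nonempty_def by auto
  moreover have "take (length b) (b @ [c - 1]) = b" by simp
  ultimately show ?thesis
    using full_take[of k a phi "length b" "b @ [c - 1]"] by metis
qed

lemma least_empty_bounds_if_violation: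
  assumes "zero_before_one k a phi" "violation k a c phi b"
  shows "2 \<le> least_empty k a phi b" "least_empty k a phi b < c"
proof -
  have "nonempty k a phi (b @ [i])" if "i < 2" for i
    using assms that unfolding violation_def zero_before_one_def by (auto simp: less_2_cases_iff)
  then show "2 \<le> least_empty k a phi b" by (rule le_least_empty)
  show "least_empty k a phi b < c"
    using assms(2) least_empty_le[of k a phi b "c - 1"] c_pos unfolding violation_def by simp
qed

lemma next_elem_if_violation:
  assumes "zero_before_one k a phi" "heavy_settled k a phi" "violation k a c phi b"
  shows "take (Suc (length b)) (next_elem k a phi) = b @ [least_empty k a phi b]"
    and "\<And>i. length b < i \<Longrightarrow> i < k - 1 \<Longrightarrow> next_elem k a phi ! i = 0"
    and "next_elem k a phi \<in> elemA k a"
proof -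
  let ?x = "next_elem k a phi" and ?m = "least_empty k a phi b"
  have length_b: "length b < k - 1" and length_x: "length ?x = k - 1"
    using assms(3) length_next_elem[OF two_le_k] unfolding violation_def by auto
  have "heavy k a phi b"
    using assms(1,3) heavy_if_nonempty_children[of k a phi b 0 1]
    unfolding violation_def zero_before_one_def by auto
  then have take_b: "take (length b) ?x = b"
    using take_next_elem_heavy[OF two_le_k assms(2)] violation_not_full[OF assms(3)] by blast
  have m_less: "?m < c" and m_le: "?m < a (k - length b)"
    using least_empty_bounds_if_violation[OF assms(1,3)] c_le_coord_bound[OF length_b] by auto
  then have "next_choice k a phi (k - 2 - length b) b = ?m"
    using c_le_a2 by (simp add: next_choice_def)
  then have "?x ! length b = ?m"
    using nth_next_elem[OF two_le_k length_b] take_b by simp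
  then show take_Suc: "take (Suc (length b)) ?x = b @ [?m]"
    using take_b length_b length_x take_Suc_eq_snoc_iff by metis
  show zeros: "?x ! i = 0" if "length b < i" "i < k - 1" for i
    using nth_next_elem_eq_0[of k a phi "Suc (length b)" i, OF two_le_k a2_pos] that take_Suc
      not_nonempty_least_empty by simp
  obtain al where al: "al \<in> elemA k a" "take (Suc (length b)) al = b @ [?m]"
    using elemA_extend assms(3) m_le unfolding violation_def by blast
  show "?x \<in> elemA k a"
    unfolding elemA_def
  proof (intro CollectI conjI allI impI)
    fix t assume t: "t < k - 1"
    show "?x ! t < a (k - t)"
    proof (cases "t \<le> length b")
      case True
      then have "?x ! t = al ! t"
        using take_Suc al(2) by (metis le_imp_less_Suc nth_take)
      then show ?thesis using al(1) t unfolding elemA_def by simp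
    next
      case False
      then show ?thesis
        using zeros t c_le_coord_bound c_pos by fastforce
    qed
  qed (rule length_x)
qed

lemma violation_before_next_empty:
  assumes "zero_before_one k a phi" "heavy_settled k a phi" "violation k a c phi b0"
    and "violation k a c (next_empty k a phi) b"
  shows "violation k a c phi b"
proof -
  let ?x = "next_elem k a phi"
  have length_b: "length b < k - 1" and length_x: "length ?x = k - 1"
    using assms(4) length_next_elem[OF two_le_k] unfolding violation_def by auto
  have "nonempty k a phi (b @ [1])"
  proof (rule ccontr)
    assume "\<not> nonempty k a phi (b @ [1])"
    then have "take (Suc (length b)) ?x = b @ [1]"
      using assms(4) unfolding violation_def by (simp add: next_empty_eq_fun_upd nonempty_fun_upd_True)
    then have x_b: "?x ! length b = 1" and take_b: "take (length b) ?x = b"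
      unfolding take_Suc_eq_snoc_iff by simp_all
    note x_b0 = next_elem_if_violation[OF assms(1-3)]
    consider "length b < length b0" | "length b = length b0" | "length b0 < length b"
      by linarith
    then show False
    proof cases
      case 1
      have "take (Suc (length b)) (b0 @ [1]) = take (Suc (length b)) (b0 @ [least_empty k a phi b0])"
        using 1 by simp
      also have "\<dots> = take (Suc (length b)) (take (Suc (length b0)) ?x)"
        by (simp only: x_b0(1))
      also have "\<dots> = take (Suc (length b)) ?x"
        using 1 by (simp add: min_def)
      finally have "take (Suc (length b)) (b0 @ [1]) = take (Suc (length b)) ?x" .
      then have "nonempty k a phi (b @ [1])"
        using nonempty_take[of k a phi "b0 @ [1]"] assms(3) \<open>take (Suc (length b)) ?x = b @ [1]\<close>
        unfolding violation_def by metis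
      then show False using \<open>\<not> nonempty k a phi (b @ [1])\<close> by simp
    next
      case 2
      then have "?x ! length b = least_empty k a phi b0"
        using x_b0(1) take_Suc_eq_snoc_iff by metis
      then show False
        using x_b least_empty_bounds_if_violation(1)[OF assms(1,3)] by simp
    next
      case 3
      then show False using x_b x_b0(2) length_b by simp
    qed
  qed
  moreover have "\<not> nonempty k a phi (b @ [c - 1])"
    using assms(4) unfolding violation_def by (simp add: next_empty_eq_fun_upd nonempty_fun_upd_True)
  ultimately show ?thesis
    using assms(4) unfolding violation_def by simp
qed

lemma least_empty_less_next_empty:
  assumes "zero_before_one k a phi" "heavy_settled k a phi" "violation k a c phi b"
  shows "least_empty k a phi b < least_empty k a (next_empty k a phi) b"
proof -
  let ?m = "least_empty k a phi b"
  have "nonempty k a (next_empty k a phi) (b @ [i])" if "i \<le> ?m" for i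
  proof (cases "i < ?m")
    case True
    then show ?thesis
      using nonempty_less_least_empty by (simp add: next_empty_eq_fun_upd nonempty_fun_upd_True)
  next
    case False
    then show ?thesis
      using that next_elem_if_violation(1,3)[OF assms]
      by (simp add: next_empty_eq_fun_upd nonempty_fun_upd_True)
  qed
  then show ?thesis
    using le_least_empty[of "Suc ?m"] by (simp add: Suc_le_eq)
qed

theorem Kc_connected_within:
  assumes "zero_before_one k a phi" "heavy_settled k a phi"
    and "\<And>b. violation k a c phi b \<Longrightarrow> s \<le> least_empty k a phi b"
    and "c \<le> s + r"
  shows "\<exists>j \<le> r. (\<forall>i < j. \<not> full k a ((next_empty k a ^^ i) phi) []) \<and>
                 Kc_connected k a c ((next_empty k a ^^ j) phi)"
  using assms
proof (induction r arbitrary: phi s)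
  case 0
  then have "\<nexists>b. violation k a c phi b"
    using least_empty_bounds_if_violation(2) by fastforce
  then show ?case
    by (simp add: Kc_connected_iff_no_violation)
next
  case (Suc r)
  show ?case
  proof (cases "\<exists>b0. violation k a c phi b0")
    case False
    then show ?thesis by (auto simp: Kc_connected_iff_no_violation)
  next
    case True
    then obtain b0 where b0: "violation k a c phi b0" ..
    let ?phi' = "next_empty k a phi"
    have "Suc s \<le> least_empty k a ?phi' b" if "violation k a c ?phi' b" for b
    proof -
      have "violation k a c phi b"
        using violation_before_next_empty[OF Suc.prems(1,2) b0 that] .
      then show ?thesis
        using Suc.prems(3) least_empty_less_next_empty[OF Suc.prems(1,2)] by (meson le_less_trans Suc_leI)
    qed
    then obtain j where j: "j \<le> r" "\<forall>i < j. \<not> full k a ((next_empty k a ^^ i) ?phi') []"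
      "Kc_connected k a c ((next_empty k a ^^ j) ?phi')"
      using Suc.IH[of ?phi' "Suc s"] Suc.prems
        zero_before_one_next_empty[of k a, OF two_le_k a2_pos] heavy_settled_next_empty[OF two_le_k]
      by auto
    have "\<not> full k a phi []"
      using violation_not_full[OF b0] full_take[of k a phi 0 b0] by auto
    then have "\<forall>i < Suc j. \<not> full k a ((next_empty k a ^^ i) phi) []"
      using j(2) by (auto simp: less_Suc_eq_0_disj funpow_Suc_right simp del: funpow.simps)
    moreover have "Kc_connected k a c ((next_empty k a ^^ Suc j) phi)"
      using j(3) by (simp add: funpow_Suc_right del: funpow.simps)
    ultimately show ?thesis using j(1) by (intro exI[of _ "Suc j"]) auto
  qed
qed

end

theorem corollary2:
  fixes k c :: nat and a :: "nat \<Rightarrow> nat" and phi :: "nat list \<Rightarrow> bool"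
  assumes "2 \<le> k"
    and "\<forall>i. 2 \<le> i \<and> i \<le> k \<longrightarrow> 0 < a i"
    and "\<forall>i. 2 < i \<and> i \<le> k \<longrightarrow> a 2 \<le> a i"
    and "0 < c" and "c \<le> a 2"
    and "partial_listing k a phi"
  shows "\<exists>j \<le> c - 2.
           (\<forall>i < j. \<not> full k a ((next_empty k a ^^ i) phi) []) \<and>
           Kc_connected k a c ((next_empty k a ^^ j) phi)"
proof -
  \<comment> \<open>The positivity hypothesis on all \<open>a i\<close> is implied by \<open>0 < c \<le> a 2 \<le> a i\<close>.\<close>
  interpret listing_params k a c
    using assms(1,3,4,5) by unfold_locales
  note invariants = partial_listing_invariants[OF two_le_k a2_pos assms(6)]
  show ?thesis
  proof (rule Kc_connected_within[OF invariants])
    show "\<And>b. violation k a c phi b \<Longrightarrow> 2 \<le> least_empty k a phi b"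
      using least_empty_bounds_if_violation(1)[OF invariants(1)] .
  qed simp
qed

end
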